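(* Let $H=H(V,w)$ be a weighted graph and let $\mathcal D=\{H^j(V_j,w_j):1\le j\le m\}$ be a decomposition of $H$. For each vertex $u\in V$ let $\lambda(\mathcal D_u)=\sum_{j:\,u\in V_j}\lambda(H^j)$ (an empty sum being $0$). Then $$\lambda(H)\ \ge\ \min_{u\in V}\lambda(\mathcal D_u).$$ Writing $\lambda(\mathcal D)=\min_u\lambda(\mathcal D_u)$, equality holds if and only if there is a nonzero real vector $x=(x_u)_{u\in V}$ such that (1) $x_u=0$ for every $u$ with $\lambda(\mathcal D_u)>\lambda(\mathcal D)$, and (2) for every $1\le j\le m$, the restriction $x_j$ of $x$ to $V_j$ is either the zero vector or an eigenvector of the adjacency matrix $A(w_j)$ of $H^j$ for the eigenvalue $\lambda(H^j)$.
   Context: A weighted graph $H(V,w)$ consists of a finite vertex set $V$ and a function $w$ assigning a real number (possibly negative or zero) $w(uv)$ to every unordered pair $\{u,v\}$ of vertices, including pairs with $u=v$ (loops). Its adjacency matrix $A(w)$ is the real symmetric matrix indexed by $V$ with $(u,v)$-entry $w(uv)$ (so diagonal entries are $w(uu)$), and $\lambda(H)$ denotes the smallest eigenvalue of $A(w)$. A family $\{H^j(V_j,w_j):1\le j\le m\}$ of weighted graphs is a decomposition of $H(V,w)$ if $V_j\subseteq V$ for all $j$ and $w(uv)=\sum_{j=1}^m w_j(uv)$ for all unordered pairs $u,v\in V$, where $w_j(uv)$ is taken to be $0$ if $u\notin V_j$ or $v\notin V_j$. *)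

theory Defs
  imports Complex_Main
begin

text \<open>A weighted graph H(V,w): finite vertex set V :: 'a set and weight function
  w :: 'a => 'a => real, symmetric (w u v = w v u) since weights live on unordered pairs.
  Vectors indexed by V are functions 'a => real (values outside V are ignored).\<close>

definition adj_apply :: "'a set \<Rightarrow> ('a \<Rightarrow> 'a \<Rightarrow> real) \<Rightarrow> ('a \<Rightarrow> real) \<Rightarrow> 'a \<Rightarrow> real" where
  "adj_apply V w x u = (\<Sum>v\<in>V. w u v * x v)"

definition is_eigenvector :: "'a set \<Rightarrow> ('a \<Rightarrow> 'a \<Rightarrow> real) \<Rightarrow> real \<Rightarrow> ('a \<Rightarrow> real) \<Rightarrow> bool" where
  "is_eigenvector V w lam x \<longleftrightarrow>
     (\<exists>u\<in>V. x u \<noteq> 0) \<and> (\<forall>u\<in>V. adj_apply V w x u = lam * x u)"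

definition eigenvalues :: "'a set \<Rightarrow> ('a \<Rightarrow> 'a \<Rightarrow> real) \<Rightarrow> real set" where
  "eigenvalues V w = {lam. \<exists>x. is_eigenvector V w lam x}"

definition smallest_eig :: "'a set \<Rightarrow> ('a \<Rightarrow> 'a \<Rightarrow> real) \<Rightarrow> real" where
  "smallest_eig V w = Min (eigenvalues V w)"

definition is_decomposition ::
  "'a set \<Rightarrow> ('a \<Rightarrow> 'a \<Rightarrow> real) \<Rightarrow> nat \<Rightarrow> (nat \<Rightarrow> 'a set) \<Rightarrow> (nat \<Rightarrow> 'a \<Rightarrow> 'a \<Rightarrow> real) \<Rightarrow> bool" where
  "is_decomposition V w m Vs ws \<longleftrightarrow>
     (\<forall>j\<in>{1..m}. Vs j \<subseteq> V) \<and>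
     (\<forall>u\<in>V. \<forall>v\<in>V. w u v =
        (\<Sum>j\<in>{1..m}. if u \<in> Vs j \<and> v \<in> Vs j then ws j u v else 0))"

definition lam_Du :: "nat \<Rightarrow> (nat \<Rightarrow> 'a set) \<Rightarrow> (nat \<Rightarrow> 'a \<Rightarrow> 'a \<Rightarrow> real) \<Rightarrow> 'a \<Rightarrow> real" where
  "lam_Du m Vs ws u = (\<Sum>j\<in>{j\<in>{1..m}. u \<in> Vs j}. smallest_eig (Vs j) (ws j))"

definition lam_D :: "'a set \<Rightarrow> nat \<Rightarrow> (nat \<Rightarrow> 'a set) \<Rightarrow> (nat \<Rightarrow> 'a \<Rightarrow> 'a \<Rightarrow> real) \<Rightarrow> real" where
  "lam_D V m Vs ws = Min (lam_Du m Vs ws ` V)"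

end

theory Submission
  imports Defs "HOL-Analysis.Analysis"
begin

text \<open>For every vector x, summing the Rayleigh inequalities
  \<open>\<lambda>(H\<^sup>j) |x\<^sub>j|\<^sup>2 \<le> x\<^sub>j\<^sup>T A(w\<^sub>j) x\<^sub>j\<close> over j gives
  \<open>x\<^sup>T A(w) x \<ge> \<Sum>\<^sub>u \<lambda>(D\<^sub>u) x\<^sub>u\<^sup>2 \<ge> \<lambda>(D) |x|\<^sup>2\<close>.
  Applied to an eigenvector of \<open>\<lambda>(H)\<close> this gives the bound. Equality \<open>\<lambda>(H) = \<lambda>(D)\<close>
  means that some nonzero x makes every one of these inequalities tight, and a Rayleigh
  inequality is tight exactly at eigenvectors of the smallest eigenvalue; tightness of the
  middle inequality is condition (1). The Rayleigh characterisation of the smallest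
  eigenvalue itself comes from minimising the quadratic form over the compact unit sphere.\<close>

definition dot :: "'a set \<Rightarrow> ('a \<Rightarrow> real) \<Rightarrow> ('a \<Rightarrow> real) \<Rightarrow> real" where
  "dot V x y = (\<Sum>v\<in>V. x v * y v)"

definition quad_form :: "'a set \<Rightarrow> ('a \<Rightarrow> 'a \<Rightarrow> real) \<Rightarrow> ('a \<Rightarrow> real) \<Rightarrow> real" where
  "quad_form V w x = dot V x (adj_apply V w x)"

subsection \<open>Inner product and quadratic form\<close>

lemma dot_commute: "dot V x y = dot V y x"
  unfolding dot_def by (simp add: mult.commute)

lemma dot_self_nonneg: "dot V x x \<ge> 0"
  unfolding dot_def by (simp add: sum_nonneg)

lemma dot_self_eq_0_iff:
  assumes "finite V"
  shows "dot V x x = 0 \<longleftrightarrow> (\<forall>u\<in>V. x u = 0)"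
  using assms unfolding dot_def by (subst sum_nonneg_eq_0_iff) auto

lemma dot_self_pos:
  assumes "finite V" and "\<exists>u\<in>V. x u \<noteq> 0"
  shows "dot V x x > 0"
  using assms dot_self_eq_0_iff[OF assms(1)] dot_self_nonneg[of V x] by fastforce

lemma dot_add_scaled:
  "dot V (\<lambda>u. x u + c * y u) (\<lambda>u. x u + c * y u) = dot V x x + 2 * c * dot V y x + c\<^sup>2 * dot V y y"
  by (simp add: dot_def algebra_simps sum.distrib sum_distrib_left power2_eq_square)

lemma dot_scale: "dot V (\<lambda>u. c * x u) (\<lambda>u. c * x u) = c\<^sup>2 * dot V x x"
  by (simp add: dot_def sum_distrib_left algebra_simps power2_eq_square)

lemma adj_apply_symmetric:
  assumes "\<And>u v. w u v = w v u"
  shows "dot V x (adj_apply V w y) = dot V y (adj_apply V w x)"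
proof -
  have "dot V x (adj_apply V w y) = (\<Sum>u\<in>V. \<Sum>v\<in>V. x u * w u v * y v)"
    by (simp add: dot_def adj_apply_def sum_distrib_left mult_ac)
  also have "\<dots> = (\<Sum>v\<in>V. \<Sum>u\<in>V. x u * w u v * y v)" by (rule sum.swap)
  also have "\<dots> = dot V y (adj_apply V w x)"
    by (simp add: dot_def adj_apply_def sum_distrib_left mult_ac assms)
  finally show ?thesis .
qed

lemma adj_apply_add_scaled:
  "adj_apply V w (\<lambda>u. x u + c * y u) u = adj_apply V w x u + c * adj_apply V w y u"
  by (simp add: adj_apply_def algebra_simps sum.distrib sum_distrib_left)

lemma adj_apply_scale: "adj_apply V w (\<lambda>u. c * x u) u = c * adj_apply V w x u"
  by (simp add: adj_apply_def sum_distrib_left mult_ac)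

lemma quad_form_add_scaled:
  assumes "\<And>u v. w u v = w v u"
  shows "quad_form V w (\<lambda>u. x u + c * y u)
    = quad_form V w x + 2 * c * dot V y (adj_apply V w x) + c\<^sup>2 * quad_form V w y"
proof -
  have "quad_form V w (\<lambda>u. x u + c * y u) = quad_form V w x + c * dot V x (adj_apply V w y)
      + c * dot V y (adj_apply V w x) + c\<^sup>2 * quad_form V w y"
    unfolding quad_form_def dot_def adj_apply_add_scaled
    by (simp add: algebra_simps sum.distrib sum_distrib_left power2_eq_square)
  then show ?thesis using adj_apply_symmetric[where V=V and x=x and y=y, OF assms] by simp
qed

lemma quad_form_scale: "quad_form V w (\<lambda>u. c * x u) = c\<^sup>2 * quad_form V w x"
  unfolding quad_form_def adj_apply_scale
  by (simp add: dot_def sum_distrib_left algebra_simps power2_eq_square)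

lemma quad_form_eigenvector:
  assumes "\<forall>u\<in>V. adj_apply V w x u = \<nu> * x u"
  shows "quad_form V w x = \<nu> * dot V x x"
  using assms unfolding quad_form_def dot_def by (simp add: sum_distrib_left mult_ac)

lemma quad_form_cong:
  assumes "\<forall>u\<in>V. x u = y u"
  shows "quad_form V w x = quad_form V w y"
  using assms unfolding quad_form_def dot_def adj_apply_def by simp

lemma dot_cong:
  assumes "\<forall>u\<in>V. x u = y u"
  shows "dot V x x = dot V y y"
  using assms unfolding dot_def by simp

subsection \<open>The Rayleigh characterisation of the smallest eigenvalue\<close>

lemma nonneg_eq_0_if_quadratic_nonneg:
  fixes R P :: real
  assumes "R \<ge> 0" and "\<And>s. s > 0 \<Longrightarrow> - 2 * s * R + s\<^sup>2 * P \<ge> 0"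
  shows "R = 0"
proof (rule ccontr)
  assume "R \<noteq> 0"
  then have R: "R > 0" using assms(1) by simp
  define s where "s = R / (\<bar>P\<bar> + 1)"
  have s: "s > 0" using R by (simp add: s_def)
  have "s * (s * P - 2 * R) \<ge> 0"
    using assms(2)[OF s] by (simp add: algebra_simps power2_eq_square)
  then have "s * P \<ge> 2 * R" using s by (simp add: zero_le_mult_iff)
  moreover have "s * P \<le> s * \<bar>P\<bar>" using s by (simp add: mult_left_mono)
  moreover have "s * \<bar>P\<bar> < R" using R by (simp add: s_def field_simps)
  ultimately show False using R by linarith
qed

text \<open>The residual \<open>r = A x - \<mu> x\<close> satisfies \<open>Q(x - s r) - \<mu> |x - s r|\<^sup>2 = -2 s |r|\<^sup>2 + O(s\<^sup>2)\<close>,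
  which can stay nonnegative for all small \<open>s > 0\<close> only if \<open>r = 0\<close>.\<close>

lemma eigenvector_if_rayleigh_minimal:
  assumes "finite V" and sym: "\<And>u v. w u v = w v u"
    and lower: "\<And>z. \<mu> * dot V z z \<le> quad_form V w z"
    and eq: "quad_form V w x = \<mu> * dot V x x"
  shows "\<forall>u\<in>V. adj_apply V w x u = \<mu> * x u"
proof -
  define r where "r u = adj_apply V w x u - \<mu> * x u" for u
  have "dot V r (adj_apply V w x) - (dot V r r + \<mu> * dot V r x)
      = (\<Sum>u\<in>V. r u * (adj_apply V w x u - \<mu> * x u - r u))"
    by (simp add: dot_def sum_subtractf sum_distrib_left sum.distrib algebra_simps)
  then have residual: "dot V r (adj_apply V w x) = dot V r r + \<mu> * dot V r x"
    by (simp add: r_def)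
  have "dot V r r = 0"
  proof (rule nonneg_eq_0_if_quadratic_nonneg[OF dot_self_nonneg])
    fix s :: real
    have "\<mu> * dot V (\<lambda>u. x u + (-s) * r u) (\<lambda>u. x u + (-s) * r u)
        \<le> quad_form V w (\<lambda>u. x u + (-s) * r u)"
      by (rule lower)
    then show "- 2 * s * dot V r r + s\<^sup>2 * (quad_form V w r - \<mu> * dot V r r) \<ge> 0"
      unfolding quad_form_add_scaled[OF sym] dot_add_scaled residual eq
      by (simp add: algebra_simps power2_eq_square)
  qed
  then show ?thesis using dot_self_eq_0_iff[OF assms(1)] by (simp add: r_def)
qed

lemma rayleigh_minimiser_exists:
  assumes fin: "finite V" and "V \<noteq> {}"
  shows "\<exists>x. dot V x x = 1 \<and> (\<forall>z. quad_form V w x * dot V z z \<le> quad_form V w z)"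
proof -
  define S where "S = {x :: 'a \<Rightarrow> real. (\<forall>u. u \<notin> V \<longrightarrow> x u = 0) \<and> dot V x x = 1}"
  define K where "K = PiE UNIV (\<lambda>u. if u \<in> V then {-1..1} else {0 :: real})"
  have "compactin (product_topology (\<lambda>_. euclidean) UNIV) K"
    unfolding K_def compactin_PiE by auto
  then have "compact K" by (simp add: euclidean_product_topology)
  have "closed S"
    unfolding S_def dot_def
    by (intro closed_Collect_conj closed_Collect_all closed_Collect_imp closed_Collect_eq
        continuous_intros continuous_on_product_coordinates) auto
  have "S \<subseteq> K"
  proof
    fix x assume x: "x \<in> S"
    have "\<bar>x u\<bar> \<le> 1" if "u \<in> V" for u
    proof -
      have "(x u)\<^sup>2 \<le> dot V x x"
        unfolding dot_def power2_eq_square using fin that by (intro member_le_sum) auto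
      then show ?thesis using x by (simp add: S_def abs_square_le_1)
    qed
    then show "x \<in> K" using x unfolding K_def S_def by (auto simp: abs_le_iff)
  qed
  then have "compact S" using compact_Int_closed[OF \<open>compact K\<close> \<open>closed S\<close>] by (simp add: Int_absorb1)
  obtain u0 where u0: "u0 \<in> V" using assms(2) by auto
  have "(\<lambda>u. if u = u0 then 1 else 0) \<in> S"
    unfolding S_def dot_def using fin u0 by (auto simp: if_distrib cong: if_cong)
  then have "S \<noteq> {}" by auto
  moreover have "continuous_on S (quad_form V w)"
    unfolding quad_form_def dot_def adj_apply_def
    by (intro continuous_intros continuous_on_subset[OF continuous_on_product_coordinates]) auto
  ultimately obtain x where x: "x \<in> S" and min: "\<And>y. y \<in> S \<Longrightarrow> quad_form V w x \<le> quad_form V w y"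
    using continuous_attains_inf[OF \<open>compact S\<close>] by blast
  have "quad_form V w x * dot V z z \<le> quad_form V w z" for z
  proof (cases "\<forall>u\<in>V. z u = 0")
    case True
    then show ?thesis using dot_self_eq_0_iff[OF fin] quad_form_cong[of V z "\<lambda>_. 0" w]
      by (simp add: quad_form_def dot_def)
  next
    case False
    then have p: "dot V z z > 0" using dot_self_pos[OF fin] by blast
    define c where "c = 1 / sqrt (dot V z z)"
    define z' where "z' u = (if u \<in> V then c * z u else 0)" for u
    have c2: "c\<^sup>2 = 1 / dot V z z" using p by (simp add: c_def power_divide)
    have "dot V z' z' = 1"
      using dot_cong[of V z' "\<lambda>u. c * z u"] p by (simp add: z'_def dot_scale c2)
    then have "z' \<in> S" unfolding S_def z'_def by auto
    then have "quad_form V w x \<le> quad_form V w z'" by (rule min)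
    also have "\<dots> = quad_form V w z / dot V z z"
      using quad_form_cong[of V z' "\<lambda>u. c * z u" w] by (simp add: z'_def quad_form_scale c2)
    finally show ?thesis using p by (simp add: field_simps)
  qed
  then show ?thesis using x unfolding S_def by blast
qed

lemma eigenvector_normalise:
  assumes "finite V" and "is_eigenvector V w \<nu> y"
  shows "\<exists>e. dot V e e = 1 \<and> (\<forall>u\<in>V. adj_apply V w e u = \<nu> * e u)"
proof -
  have p: "dot V y y > 0" and ev: "\<forall>u\<in>V. adj_apply V w y u = \<nu> * y u"
    using assms dot_self_pos[OF assms(1)] unfolding is_eigenvector_def by blast+
  define c where "c = 1 / sqrt (dot V y y)"
  have "c\<^sup>2 = 1 / dot V y y" using p by (simp add: c_def power_divide)
  then have "dot V (\<lambda>u. c * y u) (\<lambda>u. c * y u) = 1" using p by (simp add: dot_scale)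
  then show ?thesis using ev by (intro exI[of _ "\<lambda>u. c * y u"]) (simp add: adj_apply_scale)
qed

lemma eigenvectors_orthogonal:
  assumes "\<And>u v. w u v = w v u" and "a \<noteq> b"
    and "\<forall>u\<in>V. adj_apply V w x u = a * x u" and "\<forall>u\<in>V. adj_apply V w y u = b * y u"
  shows "dot V x y = 0"
proof -
  have "dot V x (adj_apply V w y) = dot V y (adj_apply V w x)"
    by (rule adj_apply_symmetric[OF assms(1)])
  then have "b * dot V x y = a * dot V y x"
    using assms(3,4) unfolding dot_def by (simp add: sum_distrib_left mult_ac)
  then have "(b - a) * dot V x y = 0" by (simp add: dot_commute algebra_simps)
  then show ?thesis using assms(2) by simp
qed

text \<open>Bessel's inequality for the coordinate vector \<open>\<delta>\<^sub>u\<close>, summed over u.\<close>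

lemma card_orthonormal_le:
  assumes fin: "finite V" and "finite G"
    and orth: "\<And>a b. a \<in> G \<Longrightarrow> b \<in> G \<Longrightarrow> dot V (e a) (e b) = (if a = b then 1 else 0)"
  shows "card G \<le> card V"
proof -
  have bessel: "(\<Sum>a\<in>G. (e a u)\<^sup>2) \<le> 1" if u: "u \<in> V" for u
  proof -
    define S where "S = (\<Sum>a\<in>G. (e a u)\<^sup>2)"
    define z where "z v = (\<Sum>a\<in>G. e a u * e a v)" for v
    define d where "d v = (if v = u then 1 else 0 :: real)" for v
    have "dot V z z = (\<Sum>a\<in>G. \<Sum>b\<in>G. e a u * e b u * dot V (e a) (e b))"
      unfolding dot_def z_def sum_product
      by (subst sum.swap, rule sum.cong[OF refl], subst sum.swap) (simp add: sum_distrib_left mult_ac)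
    also have "\<dots> = S"
      by (simp add: S_def orth power2_eq_square if_distrib \<open>finite G\<close> cong: if_cong)
    finally have zz: "dot V z z = S" .
    have dz: "dot V z d = S"
      unfolding dot_def d_def z_def S_def using fin u
      by (simp add: if_distrib power2_eq_square cong: if_cong)
    have dd: "dot V d d = 1"
      unfolding dot_def d_def using fin u by (simp add: if_distrib cong: if_cong)
    have "0 \<le> dot V (\<lambda>v. d v + (-1) * z v) (\<lambda>v. d v + (-1) * z v)" by (rule dot_self_nonneg)
    also have "\<dots> = 1 - S" unfolding dot_add_scaled dd zz dz by simp
    finally show ?thesis by (simp add: S_def)
  qed
  have "card G = (\<Sum>a\<in>G. dot V (e a) (e a))" using orth by simp
  also have "\<dots> = (\<Sum>u\<in>V. \<Sum>a\<in>G. (e a u)\<^sup>2)"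
    unfolding dot_def power2_eq_square by (rule sum.swap)
  also have "\<dots> \<le> (\<Sum>u\<in>V. 1)" by (intro sum_mono bessel)
  finally show ?thesis by simp
qed

lemma finite_eigenvalues:
  assumes fin: "finite V" and sym: "\<And>u v. w u v = w v u"
  shows "finite (eigenvalues V w)"
proof -
  have "card G \<le> card V" if G: "G \<subseteq> eigenvalues V w" "finite G" for G
  proof -
    have "\<forall>\<nu>\<in>G. \<exists>e. dot V e e = 1 \<and> (\<forall>u\<in>V. adj_apply V w e u = \<nu> * e u)"
      using G(1) eigenvector_normalise[OF fin] unfolding eigenvalues_def by blast
    then obtain e where e: "\<And>\<nu>. \<nu> \<in> G \<Longrightarrow> dot V (e \<nu>) (e \<nu>) = 1"
      and ev: "\<And>\<nu>. \<nu> \<in> G \<Longrightarrow> \<forall>u\<in>V. adj_apply V w (e \<nu>) u = \<nu> * e \<nu> u"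
      by metis
    show ?thesis
      using e eigenvectors_orthogonal[OF sym _ ev ev]
      by (intro card_orthonormal_le[OF fin G(2), of e]) auto
  qed
  then show ?thesis using finite_if_finite_subsets_card_bdd by blast
qed

lemma smallest_eig_rayleigh:
  assumes fin: "finite V" and ne: "V \<noteq> {}" and sym: "\<And>u v. w u v = w v u"
  shows "smallest_eig V w \<in> eigenvalues V w"
    and "\<And>z. smallest_eig V w * dot V z z \<le> quad_form V w z"
proof -
  obtain x where x1: "dot V x x = 1" and lower: "\<And>z. quad_form V w x * dot V z z \<le> quad_form V w z"
    using rayleigh_minimiser_exists[OF fin ne] by blast
  define \<mu> where "\<mu> = quad_form V w x"
  have "\<forall>u\<in>V. adj_apply V w x u = \<mu> * x u"
    using eigenvector_if_rayleigh_minimal[where w=w, OF fin sym] lower x1 by (simp add: \<mu>_def)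
  moreover have "\<exists>u\<in>V. x u \<noteq> 0" using x1 dot_self_eq_0_iff[OF fin, of x] by auto
  ultimately have mem: "\<mu> \<in> eigenvalues V w" unfolding eigenvalues_def is_eigenvector_def by blast
  have "\<mu> \<le> \<nu>" if \<nu>: "\<nu> \<in> eigenvalues V w" for \<nu>
  proof -
    obtain e where "dot V e e = 1" and "\<forall>u\<in>V. adj_apply V w e u = \<nu> * e u"
      using \<nu> eigenvector_normalise[OF fin] unfolding eigenvalues_def by blast
    then show ?thesis using lower[of e] quad_form_eigenvector by (fastforce simp: \<mu>_def)
  qed
  then have "smallest_eig V w = \<mu>"
    unfolding smallest_eig_def by (intro Min_eqI finite_eigenvalues fin sym mem)
  then show "smallest_eig V w \<in> eigenvalues V w" and "\<And>z. smallest_eig V w * dot V z z \<le> quad_form V w z"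
    using mem lower by (simp_all add: \<mu>_def)
qed

lemma smallest_eig_le_rayleigh:
  assumes "finite V" and "\<And>u v. w u v = w v u"
  shows "smallest_eig V w * dot V x x \<le> quad_form V w x"
  using assms smallest_eig_rayleigh(2)[where w=w, OF assms(1) _ assms(2)]
  by (cases "V = {}") (simp_all add: quad_form_def dot_def)

lemma rayleigh_eq_iff_eigenvector:
  assumes "finite V" and "\<And>u v. w u v = w v u"
  shows "quad_form V w x = smallest_eig V w * dot V x x
    \<longleftrightarrow> (\<forall>u\<in>V. x u = 0) \<or> is_eigenvector V w (smallest_eig V w) x"
  using eigenvector_if_rayleigh_minimal[where w=w, OF assms smallest_eig_le_rayleigh[where w=w, OF assms]]
    quad_form_eigenvector[of V w x "smallest_eig V w"] quad_form_cong[of V x "\<lambda>_. 0" w]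
    dot_cong[of V x "\<lambda>_. 0"]
  unfolding is_eigenvector_def by (auto simp: quad_form_def dot_def)

subsection \<open>Decompositions\<close>

lemma sum_sum_restrict:
  assumes "finite V" and "A \<subseteq> V"
  shows "(\<Sum>u\<in>V. \<Sum>v\<in>V. if u \<in> A \<and> v \<in> A then f u v else 0) = (\<Sum>u\<in>A. \<Sum>v\<in>A. f u v :: real)"
proof -
  have "(\<Sum>v\<in>V. if u \<in> A \<and> v \<in> A then f u v else 0) = (if u \<in> A then \<Sum>v\<in>A. f u v else 0)" for u
    using sum.inter_restrict[OF assms(1), of "f u" A] assms(2) by (auto simp: Int_absorb1)
  then show ?thesis
    using sum.inter_restrict[OF assms(1), of "\<lambda>u. \<Sum>v\<in>A. f u v" A] assms(2)
    by (simp add: Int_absorb1)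
qed

lemma quad_form_decomposition:
  assumes fin: "finite V" and dec: "is_decomposition V w m Vs ws"
  shows "quad_form V w x = (\<Sum>j\<in>{1..m}. quad_form (Vs j) (ws j) x)"
proof -
  have sub: "\<And>j. j \<in> {1..m} \<Longrightarrow> Vs j \<subseteq> V"
    and weight: "\<And>u v. u \<in> V \<Longrightarrow> v \<in> V \<Longrightarrow>
      w u v = (\<Sum>j\<in>{1..m}. if u \<in> Vs j \<and> v \<in> Vs j then ws j u v else 0)"
    using dec unfolding is_decomposition_def by auto
  have "quad_form V w x = (\<Sum>u\<in>V. \<Sum>v\<in>V. x u * w u v * x v)"
    unfolding quad_form_def dot_def adj_apply_def by (simp add: sum_distrib_left mult_ac)
  also have "\<dots> = (\<Sum>u\<in>V. \<Sum>v\<in>V. \<Sum>j\<in>{1..m}.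
      if u \<in> Vs j \<and> v \<in> Vs j then x u * ws j u v * x v else 0)"
    by (auto simp: weight sum_distrib_left sum_distrib_right intro!: sum.cong)
  also have "\<dots> = (\<Sum>j\<in>{1..m}. \<Sum>u\<in>V. \<Sum>v\<in>V.
      if u \<in> Vs j \<and> v \<in> Vs j then x u * ws j u v * x v else 0)"
    by (subst sum.swap, rule sum.cong[OF refl], rule sum.swap)
  also have "\<dots> = (\<Sum>j\<in>{1..m}. \<Sum>u\<in>Vs j. \<Sum>v\<in>Vs j. x u * ws j u v * x v)"
    by (intro sum.cong refl sum_sum_restrict fin sub)
  also have "\<dots> = (\<Sum>j\<in>{1..m}. quad_form (Vs j) (ws j) x)"
    unfolding quad_form_def dot_def adj_apply_def by (simp add: sum_distrib_left mult_ac)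
  finally show ?thesis .
qed

lemma lam_Du_weighted_sum:
  assumes fin: "finite V" and sub: "\<And>j. j \<in> {1..m} \<Longrightarrow> Vs j \<subseteq> V"
  shows "(\<Sum>u\<in>V. lam_Du m Vs ws u * (x u)\<^sup>2)
    = (\<Sum>j\<in>{1..m}. smallest_eig (Vs j) (ws j) * dot (Vs j) x x)"
proof -
  have "(\<Sum>u\<in>V. lam_Du m Vs ws u * (x u)\<^sup>2)
      = (\<Sum>u\<in>V. \<Sum>j\<in>{1..m}. if u \<in> Vs j then smallest_eig (Vs j) (ws j) * (x u)\<^sup>2 else 0)"
    unfolding lam_Du_def sum_distrib_right
    by (simp only: sum.inter_filter[OF finite_atLeastAtMost] if_distrib mult_zero_left)
  also have "\<dots> = (\<Sum>j\<in>{1..m}. \<Sum>u\<in>V \<inter> Vs j. smallest_eig (Vs j) (ws j) * (x u)\<^sup>2)"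
    by (subst sum.swap, rule sum.cong[OF refl], rule sum.inter_restrict[OF fin, symmetric])
  also have "\<dots> = (\<Sum>j\<in>{1..m}. smallest_eig (Vs j) (ws j) * dot (Vs j) x x)"
    using sub by (intro sum.cong refl)
      (simp add: Int_absorb1 dot_def sum_distrib_left power2_eq_square)
  finally show ?thesis .
qed

lemma quad_form_excess_decomposition:
  assumes "finite V" and dec: "is_decomposition V w m Vs ws"
  shows "quad_form V w x - c * dot V x x
    = (\<Sum>j\<in>{1..m}. quad_form (Vs j) (ws j) x - smallest_eig (Vs j) (ws j) * dot (Vs j) x x)
      + (\<Sum>u\<in>V. (lam_Du m Vs ws u - c) * (x u)\<^sup>2)"
proof -
  have "(\<Sum>u\<in>V. (lam_Du m Vs ws u - c) * (x u)\<^sup>2)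
      = (\<Sum>u\<in>V. lam_Du m Vs ws u * (x u)\<^sup>2) - c * dot V x x"
    by (simp add: dot_def algebra_simps sum_subtractf sum_distrib_left power2_eq_square)
  moreover have "\<And>j. j \<in> {1..m} \<Longrightarrow> Vs j \<subseteq> V" using dec unfolding is_decomposition_def by auto
  ultimately show ?thesis
    using quad_form_decomposition[OF assms, of x] lam_Du_weighted_sum[OF assms(1)]
    by (simp add: sum_subtractf)
qed

lemma lam_D_le_lam_Du:
  assumes "finite V" and "u \<in> V"
  shows "lam_D V m Vs ws \<le> lam_Du m Vs ws u"
  using assms unfolding lam_D_def by (intro Min_le) auto

lemma lam_D_rayleigh_termwise:
  assumes fin: "finite V" and symj: "\<And>j u v. j \<in> {1..m} \<Longrightarrow> ws j u v = ws j v u"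
    and dec: "is_decomposition V w m Vs ws"
  shows "lam_D V m Vs ws * dot V x x \<le> quad_form V w x"
    and "quad_form V w x = lam_D V m Vs ws * dot V x x \<longleftrightarrow>
      (\<forall>u\<in>V. (lam_Du m Vs ws u - lam_D V m Vs ws) * (x u)\<^sup>2 = 0) \<and>
      (\<forall>j\<in>{1..m}. quad_form (Vs j) (ws j) x = smallest_eig (Vs j) (ws j) * dot (Vs j) x x)"
proof -
  let ?lD = "lam_D V m Vs ws"
  have finj: "finite (Vs j)" if "j \<in> {1..m}" for j
    using dec that fin finite_subset unfolding is_decomposition_def by blast
  have parts: "quad_form (Vs j) (ws j) x - smallest_eig (Vs j) (ws j) * dot (Vs j) x x \<ge> 0"
    if "j \<in> {1..m}" for j
    using smallest_eig_le_rayleigh[where w="ws j", OF finj symj] that by simp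
  have vertices: "(lam_Du m Vs ws u - ?lD) * (x u)\<^sup>2 \<ge> 0" if "u \<in> V" for u
    using lam_D_le_lam_Du[OF fin that] by simp
  have parts_sum: "(\<Sum>j\<in>{1..m}. quad_form (Vs j) (ws j) x
      - smallest_eig (Vs j) (ws j) * dot (Vs j) x x) \<ge> 0"
    by (intro sum_nonneg parts)
  have vertices_sum: "(\<Sum>u\<in>V. (lam_Du m Vs ws u - ?lD) * (x u)\<^sup>2) \<ge> 0"
    by (intro sum_nonneg vertices)
  note excess = quad_form_excess_decomposition[OF fin dec, of x ?lD]
  show "?lD * dot V x x \<le> quad_form V w x"
    using excess parts_sum vertices_sum by linarith
  have "quad_form V w x = ?lD * dot V x x \<longleftrightarrow>
      (\<Sum>u\<in>V. (lam_Du m Vs ws u - ?lD) * (x u)\<^sup>2) = 0 \<and>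
      (\<Sum>j\<in>{1..m}. quad_form (Vs j) (ws j) x - smallest_eig (Vs j) (ws j) * dot (Vs j) x x) = 0"
    using excess add_nonneg_eq_0_iff[OF vertices_sum parts_sum] by linarith
  then show "quad_form V w x = ?lD * dot V x x \<longleftrightarrow>
      (\<forall>u\<in>V. (lam_Du m Vs ws u - ?lD) * (x u)\<^sup>2 = 0) \<and>
      (\<forall>j\<in>{1..m}. quad_form (Vs j) (ws j) x = smallest_eig (Vs j) (ws j) * dot (Vs j) x x)"
    by (simp only: sum_nonneg_eq_0_iff[OF finite_atLeastAtMost parts]
        sum_nonneg_eq_0_iff[OF fin vertices] right_minus_eq)
qed

lemma lam_D_rayleigh_eq_iff:
  assumes fin: "finite V" and symj: "\<And>j u v. j \<in> {1..m} \<Longrightarrow> ws j u v = ws j v u"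
    and dec: "is_decomposition V w m Vs ws"
  shows "quad_form V w x = lam_D V m Vs ws * dot V x x \<longleftrightarrow>
      (\<forall>u\<in>V. lam_Du m Vs ws u > lam_D V m Vs ws \<longrightarrow> x u = 0) \<and>
      (\<forall>j\<in>{1..m}. (\<forall>u\<in>Vs j. x u = 0) \<or>
         is_eigenvector (Vs j) (ws j) (smallest_eig (Vs j) (ws j)) x)"
proof -
  let ?lD = "lam_D V m Vs ws"
  have "quad_form V w x = ?lD * dot V x x \<longleftrightarrow>
      (\<forall>u\<in>V. (lam_Du m Vs ws u - ?lD) * (x u)\<^sup>2 = 0) \<and>
      (\<forall>j\<in>{1..m}. quad_form (Vs j) (ws j) x = smallest_eig (Vs j) (ws j) * dot (Vs j) x x)"
    by (rule lam_D_rayleigh_termwise(2)[OF fin _ dec]) (rule symj)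
  also have "\<dots> \<longleftrightarrow> (\<forall>u\<in>V. lam_Du m Vs ws u > ?lD \<longrightarrow> x u = 0) \<and>
      (\<forall>j\<in>{1..m}. (\<forall>u\<in>Vs j. x u = 0) \<or>
         is_eigenvector (Vs j) (ws j) (smallest_eig (Vs j) (ws j)) x)"
  proof (intro conj_cong ball_cong refl)
    fix u assume "u \<in> V"
    then show "(lam_Du m Vs ws u - ?lD) * (x u)\<^sup>2 = 0 \<longleftrightarrow> (lam_Du m Vs ws u > ?lD \<longrightarrow> x u = 0)"
      using lam_D_le_lam_Du[OF fin, of u m Vs ws] by auto
  next
    fix j assume j: "j \<in> {1..m}"
    then have "finite (Vs j)"
      using dec fin finite_subset unfolding is_decomposition_def by blast
    then show "quad_form (Vs j) (ws j) x = smallest_eig (Vs j) (ws j) * dot (Vs j) x x \<longleftrightarrow>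
        (\<forall>u\<in>Vs j. x u = 0) \<or> is_eigenvector (Vs j) (ws j) (smallest_eig (Vs j) (ws j)) x"
      using rayleigh_eq_iff_eigenvector[where w="ws j"] symj[OF j] by blast
  qed
  finally show ?thesis .
qed

theorem mainTheorem1:
  fixes V :: "'a set" and w :: "'a \<Rightarrow> 'a \<Rightarrow> real"
    and m :: nat and Vs :: "nat \<Rightarrow> 'a set" and ws :: "nat \<Rightarrow> 'a \<Rightarrow> 'a \<Rightarrow> real"
  assumes "finite V" and "V \<noteq> {}"
    and "\<And>u v. w u v = w v u"
    and "\<And>j u v. j \<in> {1..m} \<Longrightarrow> ws j u v = ws j v u"
    and "is_decomposition V w m Vs ws"
  shows "smallest_eig V w \<ge> lam_D V m Vs ws \<and>
    (smallest_eig V w = lam_D V m Vs ws \<longleftrightarrow>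
      (\<exists>x :: 'a \<Rightarrow> real. (\<exists>u\<in>V. x u \<noteq> 0) \<and>
         (\<forall>u\<in>V. lam_Du m Vs ws u > lam_D V m Vs ws \<longrightarrow> x u = 0) \<and>
         (\<forall>j\<in>{1..m}. (\<forall>u\<in>Vs j. x u = 0) \<or>
            is_eigenvector (Vs j) (ws j) (smallest_eig (Vs j) (ws j)) x)))"
proof -
  let ?lH = "smallest_eig V w" and ?lD = "lam_D V m Vs ws"
  note bound = lam_D_rayleigh_termwise(1)[where ws=ws, OF assms(1,4,5)]
    lam_D_rayleigh_eq_iff[where ws=ws, OF assms(1,4,5)]
  obtain y where y: "\<exists>u\<in>V. y u \<noteq> 0" and "\<forall>u\<in>V. adj_apply V w y u = ?lH * y u"
    using smallest_eig_rayleigh(1)[where w=w, OF assms(1-3)]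
    unfolding eigenvalues_def is_eigenvector_def by blast
  then have yQ: "quad_form V w y = ?lH * dot V y y" by (intro quad_form_eigenvector)
  have lower: "?lD \<le> ?lH"
    using bound(1)[of y] yQ dot_self_pos[OF assms(1) y] by simp
  have upper: "?lH \<le> ?lD" if "quad_form V w x = ?lD * dot V x x" and "\<exists>u\<in>V. x u \<noteq> 0" for x
    using that smallest_eig_rayleigh(2)[where w=w, OF assms(1-3), of x] dot_self_pos[OF assms(1)]
    by simp
  have "(\<forall>u\<in>V. lam_Du m Vs ws u > ?lD \<longrightarrow> y u = 0) \<and>
      (\<forall>j\<in>{1..m}. (\<forall>u\<in>Vs j. y u = 0) \<or>
         is_eigenvector (Vs j) (ws j) (smallest_eig (Vs j) (ws j)) y)" if "?lH = ?lD"
    using that yQ bound(2)[of y] by simp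
  then show ?thesis
    using lower upper bound(2) y by (blast intro: order_antisym)
qed

end
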